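(* Let $G$ be an infinite, connected, vertex-transitive, smallish graph in which every vertex has degree $k$, with a unit resistor on each edge. Then for every vertex $v$ of $G$, $$\sum_{x\sim v} R_{vx} = 2.$$
   Context: $x\sim y$ means $x$ and $y$ are adjacent. $R_{xy}$ denotes the effective electrical resistance between $x,y$ with unit resistance on every edge. Vertex transitive: for any two vertices there is a graph automorphism mapping one to the other. Smallish: $G$ has bounded degree and there are finite subgraphs $G_m\subseteq G_{m+1}$ with $\bigcup_m G_m=G$ and $|\mathrm{boundary}(G_m)|/|G_m|\to0$ (number of boundary vertices of $G_m$, i.e. those adjacent to vertices outside $G_m$, over number of vertices of $G_m$). *)

theory Defs
  imports "HOL-Analysis.Analysis"
begin

definition simple_graph :: "('a \<Rightarrow> 'a \<Rightarrow> bool) \<Rightarrow> bool" where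
  "simple_graph E \<longleftrightarrow> (\<forall>x y. E x y \<longrightarrow> E y x) \<and> (\<forall>x. \<not> E x x)"

definition connected_graph :: "('a \<Rightarrow> 'a \<Rightarrow> bool) \<Rightarrow> bool" where
  "connected_graph E \<longleftrightarrow> (\<forall>x y. E\<^sup>*\<^sup>* x y)"

definition neighbours :: "('a \<Rightarrow> 'a \<Rightarrow> bool) \<Rightarrow> 'a \<Rightarrow> 'a set" where
  "neighbours E v = {w. E v w}"

definition regular_graph :: "('a \<Rightarrow> 'a \<Rightarrow> bool) \<Rightarrow> nat \<Rightarrow> bool" where
  "regular_graph E k \<longleftrightarrow> (\<forall>v. finite (neighbours E v) \<and> card (neighbours E v) = k)"

definition graph_automorphism :: "('a \<Rightarrow> 'a \<Rightarrow> bool) \<Rightarrow> ('a \<Rightarrow> 'a) \<Rightarrow> bool" where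
  "graph_automorphism E \<sigma> \<longleftrightarrow> bij \<sigma> \<and> (\<forall>u w. E u w \<longleftrightarrow> E (\<sigma> u) (\<sigma> w))"

definition vertex_transitive :: "('a \<Rightarrow> 'a \<Rightarrow> bool) \<Rightarrow> bool" where
  "vertex_transitive E \<longleftrightarrow> (\<forall>x y. \<exists>\<sigma>. graph_automorphism E \<sigma> \<and> \<sigma> x = y)"

definition bounded_degree :: "('a \<Rightarrow> 'a \<Rightarrow> bool) \<Rightarrow> bool" where
  "bounded_degree E \<longleftrightarrow> (\<exists>D::nat. \<forall>v. finite (neighbours E v) \<and> card (neighbours E v) \<le> D)"

definition boundary :: "('a \<Rightarrow> 'a \<Rightarrow> bool) \<Rightarrow> 'a set \<Rightarrow> 'a set" where
  "boundary E S = {v \<in> S. \<exists>w. E v w \<and> w \<notin> S}"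

definition smallish :: "('a \<Rightarrow> 'a \<Rightarrow> bool) \<Rightarrow> bool" where
  "smallish E \<longleftrightarrow> bounded_degree E \<and>
     (\<exists>G :: nat \<Rightarrow> 'a set. (\<forall>m. finite (G m) \<and> G m \<subseteq> G (Suc m)) \<and> (\<Union>m. G m) = UNIV \<and>
        (\<lambda>m. real (card (boundary E (G m))) / real (card (G m))) \<longlonglongrightarrow> 0)"

text \<open>Dirichlet energy of f with unit conductances: sum over (unoriented) edges of (f u - f w)^2;
  the sum over ordered adjacent pairs counts each edge twice.\<close>
definition dirichlet_energy :: "('a \<Rightarrow> 'a \<Rightarrow> bool) \<Rightarrow> ('a \<Rightarrow> real) \<Rightarrow> ennreal" where
  "dirichlet_energy E f =
     ennreal (1/2) * (\<Sum>\<^sub>\<infinity>(u,w)\<in>{(u,w). E u w}. ennreal ((f u - f w)^2))"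

text \<open>Effective conductance (Dirichlet principle); on an infinite graph this is the
  free effective conductance, i.e. the limit of the effective conductances of an exhaustion
  by finite subgraphs.\<close>
definition eff_conductance :: "('a \<Rightarrow> 'a \<Rightarrow> bool) \<Rightarrow> 'a \<Rightarrow> 'a \<Rightarrow> ennreal" where
  "eff_conductance E x y = (INF f \<in> {f. f x = 1 \<and> f y = 0}. dirichlet_energy E f)"

definition eff_resistance :: "('a \<Rightarrow> 'a \<Rightarrow> bool) \<Rightarrow> 'a \<Rightarrow> 'a \<Rightarrow> real" where
  "eff_resistance E x y = 1 / enn2real (eff_conductance E x y)"

end

theory Submission
  imports Defs
begin

text \<open>For a finite vertex set \<open>S\<close> and an edge \<open>e\<close>, compare \<open>R(e)\<close> with twice the diagonal
  entry at \<open>e\<close> of the orthogonal projection onto a space of gradients \<open>f u - f w\<close> (edges are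
  ordered pairs, counted in both orientations). Gradients of arbitrary functions on the edges
  inside \<open>S\<close> bound \<open>R(e)\<close> from above (Dirichlet principle, by Cauchy-Schwarz); gradients of
  functions supported on \<open>S\<close>, on all edges meeting \<open>S\<close>, bound it from below (a test function
  taken from that space). Both projections have trace at most \<open>|S|\<close>, the second exactly \<open>|S|\<close>
  since on an infinite connected graph a nonzero finitely supported function has a nonzero
  gradient. As \<open>R(e) \<le> 1\<close> on edges, the edges crossing the boundary cost at most \<open>k |\<partial>S|\<close>, so
  the sum of \<open>\<Sum>x\<sim>u. R(u,x)\<close> over \<open>u \<in> S\<close> is within \<open>k |\<partial>S|\<close> of \<open>2 |S|\<close>. By vertex transitivity
  all these inner sums agree, and along the Folner sequence \<open>|\<partial>S| / |S| \<longrightarrow> 0\<close>.\<close>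

section \<open>Gradients of vertex functions\<close>

definition grad :: "'a \<times> 'a \<Rightarrow> ('a \<Rightarrow> real) \<Rightarrow> real" where
  "grad p f = f (fst p) - f (snd p)"

definition grad_inner :: "('a \<times> 'a) set \<Rightarrow> ('a \<Rightarrow> real) \<Rightarrow> ('a \<Rightarrow> real) \<Rightarrow> real" where
  "grad_inner P f g = (\<Sum>p\<in>P. grad p f * grad p g)"

definition orthonormal_on :: "('a \<times> 'a) set \<Rightarrow> (nat \<Rightarrow> 'a \<Rightarrow> real) \<Rightarrow> nat \<Rightarrow> bool" where
  "orthonormal_on P fs r \<longleftrightarrow> (\<forall>i<r. \<forall>j<r. grad_inner P (fs i) (fs j) = (if i = j then 1 else 0))"

definition lincomb :: "(nat \<Rightarrow> real) \<Rightarrow> (nat \<Rightarrow> 'a \<Rightarrow> real) \<Rightarrow> nat \<Rightarrow> 'a \<Rightarrow> real" where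
  "lincomb c fs r y = (\<Sum>i<r. c i * fs i y)"

lemma grad_lincomb: "grad p (lincomb c fs r) = (\<Sum>i<r. c i * grad p (fs i))"
  by (simp add: grad_def lincomb_def sum_subtractf[symmetric] right_diff_distrib)

lemma grad_diff: "grad p (\<lambda>y. f y - g y) = grad p f - grad p g"
  by (simp add: grad_def)

lemma grad_divide: "grad p (\<lambda>y. f y / s) = grad p f / s"
  by (simp add: grad_def diff_divide_distrib)

lemma grad_inner_commute: "grad_inner P f g = grad_inner P g f"
  by (simp add: grad_inner_def mult.commute)

lemma grad_inner_lincomb_left: "grad_inner P (lincomb c fs r) g = (\<Sum>i<r. c i * grad_inner P (fs i) g)"
  by (simp add: grad_inner_def grad_lincomb sum_distrib_left sum_distrib_right sum.swap[of _ P] mult.assoc)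

lemma grad_inner_diff_left: "grad_inner P (\<lambda>y. f y - h y) g = grad_inner P f g - grad_inner P h g"
  by (simp add: grad_inner_def grad_diff left_diff_distrib sum_subtractf)

lemma grad_inner_divide_left: "grad_inner P (\<lambda>y. f y / s) g = grad_inner P f g / s"
  by (simp add: grad_inner_def grad_divide sum_divide_distrib)

lemma grad_inner_self_nonneg: "0 \<le> grad_inner P f f"
  by (simp add: grad_inner_def sum_nonneg)

lemma grad_inner_self_eq_0:
  assumes "finite P" "grad_inner P f f = 0" "p \<in> P"
  shows "grad p f = 0"
  using assms sum_nonneg_eq_0_iff[of P "\<lambda>p. grad p f * grad p f"] by (simp add: grad_inner_def)

lemma orthonormal_on_coefficient:
  assumes "orthonormal_on P fs r" "j < r"
  shows "grad_inner P (lincomb c fs r) (fs j) = c j"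
proof -
  have "grad_inner P (lincomb c fs r) (fs j) = (\<Sum>i<r. c i * (if i = j then 1 else 0))"
    using assms by (simp add: grad_inner_lincomb_left orthonormal_on_def)
  also have "\<dots> = c j"
    using assms(2) by (simp add: if_distrib sum.delta cong: if_cong)
  finally show ?thesis .
qed

lemma orthonormal_on_norm:
  assumes "orthonormal_on P fs r"
  shows "grad_inner P (lincomb c fs r) (lincomb c fs r) = (\<Sum>i<r. (c i)\<^sup>2)"
proof -
  have "grad_inner P (lincomb c fs r) (lincomb c fs r) = (\<Sum>i<r. c i * grad_inner P (lincomb c fs r) (fs i))"
    by (simp add: grad_inner_lincomb_left grad_inner_commute)
  also have "\<dots> = (\<Sum>i<r. (c i)\<^sup>2)"
    by (rule sum.cong) (use assms in \<open>auto simp: orthonormal_on_coefficient power2_eq_square\<close>)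
  finally show ?thesis .
qed

lemma orthonormal_on_extend:
  assumes "orthonormal_on P fs r" "\<And>j. j < r \<Longrightarrow> grad_inner P h (fs j) = 0" "grad_inner P h h = 1"
  shows "orthonormal_on P (fs(r := h)) (Suc r)"
  unfolding orthonormal_on_def
proof (intro allI impI)
  fix i j assume "i < Suc r" "j < Suc r"
  then consider "i < r" "j < r" | "i = r" "j < r" | "i < r" "j = r" | "i = r" "j = r"
    by (auto simp: less_Suc_eq)
  then show "grad_inner P ((fs(r := h)) i) ((fs(r := h)) j) = (if i = j then 1 else 0)"
  proof cases
    case 1
    then show ?thesis using assms(1) by (simp add: orthonormal_on_def)
  next
    case 2
    then show ?thesis using assms(2) by simp
  next
    case 3
    then show ?thesis using assms(2)[of i] grad_inner_commute[of P h "fs i"] by simp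
  next
    case 4
    then show ?thesis using assms(3) by simp
  qed
qed

definition in_grad_span :: "('a \<times> 'a) set \<Rightarrow> (nat \<Rightarrow> 'a \<Rightarrow> real) \<Rightarrow> nat \<Rightarrow> ('a \<Rightarrow> real) \<Rightarrow> bool" where
  "in_grad_span P fs r f \<longleftrightarrow> (\<exists>c. \<forall>p\<in>P. grad p f = (\<Sum>i<r. c i * grad p (fs i)))"

lemma sum_lessThan_Suc_fun_upd:
  "(\<Sum>i<Suc r. (c(r := a)) i * grad p ((fs(r := h)) i)) = (\<Sum>i<r. c i * grad p (fs i)) + a * grad p h"
  by (auto intro!: sum.cong)

lemma in_grad_span_extend:
  assumes "in_grad_span P fs r f"
  shows "in_grad_span P (fs(r := h)) (Suc r) f"
proof -
  obtain c where "\<forall>p\<in>P. grad p f = (\<Sum>i<r. c i * grad p (fs i))"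
    using assms unfolding in_grad_span_def ..
  then have "\<forall>p\<in>P. grad p f = (\<Sum>i<Suc r. (c(r := 0)) i * grad p ((fs(r := h)) i))"
    by (simp add: sum_lessThan_Suc_fun_upd)
  then show ?thesis
    unfolding in_grad_span_def by (rule exI[of _ "c(r := 0)"])
qed

definition grad_injective_on :: "('a \<times> 'a) set \<Rightarrow> 'a set \<Rightarrow> bool" where
  "grad_injective_on P S \<longleftrightarrow>
     (\<forall>g. (\<forall>y. y \<notin> S \<longrightarrow> g y = 0) \<longrightarrow> (\<forall>p\<in>P. grad p g = 0) \<longrightarrow> (\<forall>y. g y = 0))"

lemma grad_injective_on_subset: "grad_injective_on P T \<Longrightarrow> S \<subseteq> T \<Longrightarrow> grad_injective_on P S"
  unfolding grad_injective_on_def by blast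

lemma gram_schmidt_step:
  fixes f :: "'a \<Rightarrow> real"
  assumes "finite P" "orthonormal_on P fs r"
  defines "g \<equiv> \<lambda>y. f y - lincomb (\<lambda>i. grad_inner P f (fs i)) fs r y"
  defines "h \<equiv> \<lambda>y. g y / sqrt (grad_inner P g g)"
  shows "(\<forall>p\<in>P. grad p g = 0) \<and> in_grad_span P fs r f \<or>
    orthonormal_on P (fs(r := h)) (Suc r) \<and> in_grad_span P (fs(r := h)) (Suc r) f"
proof -
  define c where "c i = grad_inner P f (fs i)" for i
  define \<beta> where "\<beta> = grad_inner P g g"
  have grad_f: "grad p f = (\<Sum>i<r. c i * grad p (fs i)) + grad p g" for p
    by (simp add: g_def c_def grad_diff grad_lincomb)
  show ?thesis
  proof (cases "\<beta> = 0")
    case True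
    then have "\<forall>p\<in>P. grad p g = 0"
      using grad_inner_self_eq_0[OF assms(1), of g] by (simp add: \<beta>_def)
    moreover from this have "in_grad_span P fs r f"
      unfolding in_grad_span_def by (intro exI[of _ c]) (simp add: grad_f)
    ultimately show ?thesis
      by blast
  next
    case False
    then have \<beta>_pos: "\<beta> > 0"
      using grad_inner_self_nonneg \<beta>_def by (metis less_eq_real_def)
    have "grad_inner P h h = grad_inner P g h / sqrt \<beta>"
      unfolding h_def \<beta>_def by (rule grad_inner_divide_left)
    also have "grad_inner P g h = grad_inner P h g"
      by (rule grad_inner_commute)
    also have "grad_inner P h g = \<beta> / sqrt \<beta>"
      unfolding h_def \<beta>_def by (rule grad_inner_divide_left)
    finally have "grad_inner P h h = 1"
      using \<beta>_pos by (simp add: divide_divide_eq_left)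
    moreover have "grad_inner P h (fs j) = 0" if "j < r" for j
      using that assms(2)
      by (simp add: h_def g_def grad_inner_divide_left grad_inner_diff_left orthonormal_on_coefficient)
    ultimately have "orthonormal_on P (fs(r := h)) (Suc r)"
      by (rule orthonormal_on_extend[OF assms(2), rotated])
    moreover have "grad p g = sqrt \<beta> * grad p h" for p
      using \<beta>_pos by (simp add: h_def \<beta>_def grad_divide)
    then have "in_grad_span P (fs(r := h)) (Suc r) f"
      unfolding in_grad_span_def
      by (intro exI[of _ "c(r := sqrt \<beta>)"]) (simp add: sum_lessThan_Suc_fun_upd grad_f)
    ultimately show ?thesis
      by blast
  qed
qed

lemma gram_schmidt_gradients:
  assumes "finite P" "finite S"
  shows "\<exists>fs r. r \<le> card S \<and> orthonormal_on P fs r \<and> (\<forall>i<r. \<forall>y. y \<notin> S \<longrightarrow> fs i y = 0) \<and>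
     (\<forall>x\<in>S. in_grad_span P fs r (indicator {x})) \<and> (grad_injective_on P S \<longrightarrow> r = card S)"
  using assms(2)
proof (induction S rule: finite_induct)
  case empty
  show ?case
    by (rule exI[of _ "\<lambda>_ _. 0"], rule exI[of _ 0]) (auto simp: orthonormal_on_def grad_injective_on_def)
next
  case (insert x S)
  then obtain fs r where r: "r \<le> card S" and on: "orthonormal_on P fs r"
    and supp: "\<forall>i<r. \<forall>y. y \<notin> S \<longrightarrow> fs i y = 0"
    and span: "\<forall>y\<in>S. in_grad_span P fs r (indicator {y})"
    and inj: "grad_injective_on P S \<longrightarrow> r = card S"
    by blast
  define g where "g = (\<lambda>y. indicator {x} y - lincomb (\<lambda>i. grad_inner P (indicator {x}) (fs i)) fs r y)"
  define h where "h = (\<lambda>y. g y / sqrt (grad_inner P g g))"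
  have gx: "g x = 1"
    using supp insert.hyps(2) by (simp add: g_def lincomb_def)
  have g_supp: "\<forall>y. y \<notin> insert x S \<longrightarrow> g y = 0"
    using supp by (simp add: g_def lincomb_def)
  have inj_S: "grad_injective_on P (insert x S) \<Longrightarrow> grad_injective_on P S"
    by (erule grad_injective_on_subset) blast
  have card_insert: "card (insert x S) = Suc (card S)"
    using insert.hyps by simp
  consider "\<forall>p\<in>P. grad p g = 0" "in_grad_span P fs r (indicator {x})"
    | "orthonormal_on P (fs(r := h)) (Suc r)" "in_grad_span P (fs(r := h)) (Suc r) (indicator {x})"
    using gram_schmidt_step[OF assms(1) on, of "indicator {x}"] unfolding h_def g_def by blast
  then show ?case
  proof cases
    case 1
    then have "\<not> grad_injective_on P (insert x S)"
      using g_supp gx unfolding grad_injective_on_def by (metis zero_neq_one)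
    then show ?thesis
      using 1 r on supp span card_insert by (intro exI[of _ fs] exI[of _ r]) auto
  next
    case 2
    have span': "\<forall>y\<in>insert x S. in_grad_span P (fs(r := h)) (Suc r) (indicator {y})"
      using 2 span in_grad_span_extend by blast
    have supp': "\<forall>i<Suc r. \<forall>y. y \<notin> insert x S \<longrightarrow> (fs(r := h)) i y = 0"
      using supp g_supp by (auto simp: h_def less_Suc_eq)
    have "Suc r \<le> card (insert x S)"
      using r card_insert by simp
    moreover have "grad_injective_on P (insert x S) \<longrightarrow> Suc r = card (insert x S)"
      using inj inj_S card_insert by simp
    ultimately show ?thesis
      using 2 supp' span' by blast
  qed
qed

lemma grad_injective_on_connected:
  assumes "connected_graph E" "infinite (UNIV :: 'a set)" "finite (S :: 'a set)"
    and "\<And>u w. E u w \<Longrightarrow> u \<in> S \<or> w \<in> S \<Longrightarrow> (u,w) \<in> P"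
  shows "grad_injective_on P S"
  unfolding grad_injective_on_def
proof (intro allI impI)
  fix g :: "'a \<Rightarrow> real" and y
  assume outside: "\<forall>y. y \<notin> S \<longrightarrow> g y = 0" and flat: "\<forall>p\<in>P. grad p g = 0"
  have edge_eq: "g u = g w" if "E u w" for u w
    using that assms(4)[OF that] flat outside by (cases "u \<in> S \<or> w \<in> S") (auto simp: grad_def)
  obtain y0 where y0: "y0 \<notin> S"
    using ex_new_if_finite[OF assms(2,3)] by blast
  have "E\<^sup>*\<^sup>* y0 y"
    using assms(1) unfolding connected_graph_def by blast
  then have "g y = g y0"
    by (induction rule: rtranclp_induct) (auto dest: edge_eq)
  then show "g y = 0"
    using outside y0 by simp
qed

lemma in_grad_span_of_indicators:
  assumes "finite S" "P \<subseteq> S \<times> S" "\<forall>x\<in>S. in_grad_span P fs r (indicator {x})"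
  shows "in_grad_span P fs r g"
proof -
  obtain c where c: "\<forall>x\<in>S. \<forall>p\<in>P. grad p (indicator {x}) = (\<Sum>i<r. c x i * grad p (fs i))"
    using assms(3) unfolding in_grad_span_def by metis
  have "\<forall>p\<in>P. grad p g = (\<Sum>i<r. (\<Sum>x\<in>S. g x * c x i) * grad p (fs i))"
  proof
    fix p
    assume p: "p \<in> P"
    have expand: "g y = (\<Sum>x\<in>S. g x * indicator {x} y)" if "y \<in> S" for y
      using that assms(1) by (simp add: indicator_def if_distrib cong: if_cong)
    have "grad p g = (\<Sum>x\<in>S. g x * grad p (indicator {x}))"
      using p assms(2) expand[of "fst p"] expand[of "snd p"]
      by (auto simp: grad_def sum_subtractf[symmetric] right_diff_distrib)
    also have "\<dots> = (\<Sum>x\<in>S. g x * (\<Sum>i<r. c x i * grad p (fs i)))"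
      using c p by simp
    also have "\<dots> = (\<Sum>i<r. (\<Sum>x\<in>S. g x * c x i) * grad p (fs i))"
      by (simp add: sum_distrib_left sum_distrib_right sum.swap[of _ S] mult.assoc)
    finally show "grad p g = (\<Sum>i<r. (\<Sum>x\<in>S. g x * c x i) * grad p (fs i))" .
  qed
  then show ?thesis
    unfolding in_grad_span_def by (rule exI[of _ "\<lambda>i. \<Sum>x\<in>S. g x * c x i"])
qed

text \<open>For an orthonormal family \<open>fs\<close>, \<open>proj_diag fs r p\<close> is the diagonal entry at \<open>p\<close> of the
  orthogonal projection onto the span of \<open>fs 0, \<dots>, fs (r - 1)\<close>.\<close>

definition proj_diag :: "(nat \<Rightarrow> 'a \<Rightarrow> real) \<Rightarrow> nat \<Rightarrow> 'a \<times> 'a \<Rightarrow> real" where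
  "proj_diag fs r p = (\<Sum>i<r. (grad p (fs i))\<^sup>2)"

lemma proj_diag_nonneg: "0 \<le> proj_diag fs r p"
  by (simp add: proj_diag_def sum_nonneg)

lemma orthonormal_on_trace:
  assumes "orthonormal_on P fs r"
  shows "(\<Sum>p\<in>P. proj_diag fs r p) = r"
proof -
  have "(\<Sum>p\<in>P. proj_diag fs r p) = (\<Sum>i<r. grad_inner P (fs i) (fs i))"
    by (simp add: proj_diag_def grad_inner_def sum.swap[of _ P] power2_eq_square)
  also have "\<dots> = r"
    using assms by (simp add: orthonormal_on_def)
  finally show ?thesis .
qed

lemma grad_sq_le_proj_diag:
  assumes "orthonormal_on P fs r" "in_grad_span P fs r f" "p \<in> P"
  shows "(grad p f)\<^sup>2 \<le> grad_inner P f f * proj_diag fs r p"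
proof -
  obtain c where c: "\<forall>q\<in>P. grad q f = (\<Sum>i<r. c i * grad q (fs i))"
    using assms(2) unfolding in_grad_span_def ..
  have "grad_inner P f f = grad_inner P (lincomb c fs r) (lincomb c fs r)"
    unfolding grad_inner_def by (rule sum.cong) (simp_all add: c grad_lincomb)
  also have "\<dots> = (\<Sum>i<r. (c i)\<^sup>2)"
    by (rule orthonormal_on_norm[OF assms(1)])
  finally have norm: "grad_inner P f f = (\<Sum>i<r. (c i)\<^sup>2)" .
  have "(grad p f)\<^sup>2 = (\<Sum>i<r. c i * grad p (fs i))\<^sup>2"
    using c assms(3) by simp
  also have "\<dots> \<le> (\<Sum>i<r. (c i)\<^sup>2) * proj_diag fs r p"
    unfolding proj_diag_def by (rule Cauchy_Schwarz_ineq_sum)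
  finally show ?thesis
    by (simp add: norm)
qed

section \<open>Dirichlet energy and effective conductance\<close>

lemma dirichlet_energy_ge_grad_inner:
  assumes "finite P" "P \<subseteq> {(u,w). E u w}"
  shows "ennreal (grad_inner P f f / 2) \<le> dirichlet_energy E f"
proof -
  have "ennreal (grad_inner P f f) = (\<Sum>(u,w)\<in>P. ennreal ((f u - f w)\<^sup>2))"
    by (simp add: grad_inner_def grad_def sum_ennreal case_prod_beta power2_eq_square)
  also have "\<dots> = (\<Sum>\<^sub>\<infinity>(u,w)\<in>P. ennreal ((f u - f w)\<^sup>2))"
    using assms(1) by simp
  also have "\<dots> \<le> (\<Sum>\<^sub>\<infinity>(u,w)\<in>{(u,w). E u w}. ennreal ((f u - f w)\<^sup>2))"
    by (rule infsum_mono_neutral) (use assms(2) in \<open>auto intro: nonneg_summable_on_complete\<close>)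
  finally have "ennreal (1/2) * ennreal (grad_inner P f f) \<le> dirichlet_energy E f"
    unfolding dirichlet_energy_def by (rule mult_left_mono) simp
  moreover have "ennreal (grad_inner P f f / 2) = ennreal (1/2) * ennreal (grad_inner P f f)"
    using ennreal_mult'[of "1/2" "grad_inner P f f"] by simp
  ultimately show ?thesis
    by simp
qed

lemma dirichlet_energy_eq_grad_inner:
  assumes "finite P" "P \<subseteq> {(u,w). E u w}" "\<And>p. p \<in> {(u,w). E u w} - P \<Longrightarrow> grad p f = 0"
  shows "dirichlet_energy E f = ennreal (grad_inner P f f / 2)"
proof -
  have "(\<Sum>\<^sub>\<infinity>(u,w)\<in>{(u,w). E u w}. ennreal ((f u - f w)\<^sup>2)) = (\<Sum>\<^sub>\<infinity>(u,w)\<in>P. ennreal ((f u - f w)\<^sup>2))"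
    by (rule infsum_cong_neutral) (use assms in \<open>auto simp: grad_def\<close>)
  also have "\<dots> = ennreal (grad_inner P f f)"
    using assms(1) by (simp add: grad_inner_def grad_def sum_ennreal case_prod_beta power2_eq_square)
  finally have "dirichlet_energy E f = ennreal (1/2) * ennreal (grad_inner P f f)"
    unfolding dirichlet_energy_def by simp
  also have "\<dots> = ennreal (grad_inner P f f / 2)"
    using ennreal_mult'[of "1/2" "grad_inner P f f"] by simp
  finally show ?thesis .
qed

lemma eff_conductance_le_dirichlet_energy:
  "f a = 1 \<Longrightarrow> f b = 0 \<Longrightarrow> eff_conductance E a b \<le> dirichlet_energy E f"
  unfolding eff_conductance_def by (rule INF_lower) simp

lemma eff_conductance_greatest:
  "(\<And>f. f a = 1 \<Longrightarrow> f b = 0 \<Longrightarrow> c \<le> dirichlet_energy E f) \<Longrightarrow> c \<le> eff_conductance E a b"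
  unfolding eff_conductance_def by (rule INF_greatest) simp

locale locally_finite_graph =
  fixes E :: "'a \<Rightarrow> 'a \<Rightarrow> bool"
  assumes simple: "simple_graph E"
    and finite_neighbours: "finite (neighbours E v)"
begin

lemma edge_sym: "E u w \<Longrightarrow> E w u"
  using simple unfolding simple_graph_def by blast

lemma edge_neq: "E u w \<Longrightarrow> u \<noteq> w"
  using simple unfolding simple_graph_def by blast

lemma eff_conductance_edge_ge_1:
  assumes "E a b"
  shows "1 \<le> eff_conductance E a b"
proof (rule eff_conductance_greatest)
  fix f :: "'a \<Rightarrow> real"
  assume "f a = 1" "f b = 0"
  then have "grad_inner {(a,b), (b,a)} f f = 2"
    using edge_neq[OF assms] by (simp add: grad_inner_def grad_def)
  moreover have "ennreal (grad_inner {(a,b), (b,a)} f f / 2) \<le> dirichlet_energy E f"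
    by (rule dirichlet_energy_ge_grad_inner) (use assms edge_sym in auto)
  ultimately show "1 \<le> dirichlet_energy E f"
    by simp
qed

lemma eff_conductance_edge_finite:
  assumes "E a b"
  shows "eff_conductance E a b < \<infinity>"
proof -
  define P where "P = {(u,w). E u w \<and> (u = a \<or> w = a)}"
  have "P \<subseteq> {a} \<times> neighbours E a \<union> neighbours E a \<times> {a}"
    using edge_sym unfolding P_def neighbours_def by auto
  then have "finite P"
    by (rule finite_subset) (simp add: finite_neighbours)
  then have "dirichlet_energy E (indicator {a}) = ennreal (grad_inner P (indicator {a}) (indicator {a}) / 2)"
    by (rule dirichlet_energy_eq_grad_inner) (auto simp: P_def grad_def indicator_def)
  moreover have "eff_conductance E a b \<le> dirichlet_energy E (indicator {a})"
    by (rule eff_conductance_le_dirichlet_energy) (use edge_neq[OF assms] in auto)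
  ultimately show ?thesis
    by (simp add: order_le_less_trans)
qed

lemma eff_conductance_edge_real:
  assumes "E a b"
  shows "eff_conductance E a b = ennreal (enn2real (eff_conductance E a b))"
    and "1 \<le> enn2real (eff_conductance E a b)"
  using eff_conductance_edge_finite[OF assms] eff_conductance_edge_ge_1[OF assms]
  by (auto simp: ennreal_enn2real_if intro: enn2real_mono[of 1, simplified])

lemma eff_resistance_edge_bounds:
  assumes "E a b"
  shows "0 < eff_resistance E a b" "eff_resistance E a b \<le> 1"
  using eff_conductance_edge_real(2)[OF assms] unfolding eff_resistance_def by auto

lemma eff_resistance_ge:
  assumes "E a b" "0 < t" "eff_conductance E a b \<le> ennreal (1 / t)"
  shows "t \<le> eff_resistance E a b"
proof -
  have "enn2real (eff_conductance E a b) \<le> 1 / t"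
    using assms(2,3) by (simp add: enn2real_leI)
  then show ?thesis
    using eff_conductance_edge_real(2)[OF assms(1)] assms(2)
    unfolding eff_resistance_def by (simp add: field_simps)
qed

lemma eff_resistance_le:
  assumes "E a b" "0 < t" "ennreal (1 / t) \<le> eff_conductance E a b"
  shows "eff_resistance E a b \<le> t"
proof -
  have "ennreal (1 / t) \<le> ennreal (enn2real (eff_conductance E a b))"
    using assms(3) eff_conductance_edge_real(1)[OF assms(1)] by simp
  then have "1 / t \<le> enn2real (eff_conductance E a b)"
    by (simp add: ennreal_le_iff)
  then show ?thesis
    using eff_conductance_edge_real(2)[OF assms(1)] assms(2)
    unfolding eff_resistance_def by (simp add: field_simps)
qed

lemma eff_resistance_ge_proj_diag:
  assumes "E a b" "finite P" "P \<subseteq> {(u,w). E u w}" "orthonormal_on P fs r"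
    and vanish: "\<And>p i. p \<in> {(u,w). E u w} - P \<Longrightarrow> i < r \<Longrightarrow> grad p (fs i) = 0"
  shows "2 * proj_diag fs r (a,b) \<le> eff_resistance E a b"
proof (cases "proj_diag fs r (a,b) = 0")
  case True
  then show ?thesis
    using eff_resistance_edge_bounds(1)[OF assms(1)] by simp
next
  case False
  define \<rho> where "\<rho> = proj_diag fs r (a,b)"
  have \<rho>_pos: "0 < \<rho>"
    using False proj_diag_nonneg \<rho>_def by (metis less_eq_real_def)
  \<comment> \<open>\<open>h\<close> has as gradient the projection of the unit vector at \<open>(a,b)\<close>, rescaled to \<open>\<nabla>h(a,b) = 1\<close>\<close>
  define c where "c i = grad (a,b) (fs i) / \<rho>" for i
  define h where "h = (\<lambda>y. lincomb c fs r y - lincomb c fs r b)"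
  have grad_h: "grad p h = (\<Sum>i<r. c i * grad p (fs i))" for p
    unfolding grad_lincomb[symmetric] by (simp add: h_def grad_def)
  have "grad (a,b) h = (\<Sum>i<r. (grad (a,b) (fs i))\<^sup>2) / \<rho>"
    by (simp add: grad_h c_def power2_eq_square sum_divide_distrib)
  then have "grad (a,b) h = 1"
    using \<rho>_pos by (simp add: \<rho>_def proj_diag_def)
  then have "h a = 1" "h b = 0"
    by (simp_all add: h_def grad_def)
  then have "eff_conductance E a b \<le> dirichlet_energy E h"
    by (rule eff_conductance_le_dirichlet_energy)
  also have "\<dots> = ennreal (grad_inner P h h / 2)"
    by (rule dirichlet_energy_eq_grad_inner[OF assms(2,3)]) (simp add: grad_h vanish)
  also have "grad_inner P h h = (\<Sum>i<r. (c i)\<^sup>2)"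
    using orthonormal_on_norm[OF assms(4), of c] by (simp add: grad_inner_def grad_h grad_lincomb)
  also have "\<dots> = \<rho> / \<rho>\<^sup>2"
    by (simp add: c_def power_divide sum_divide_distrib \<rho>_def proj_diag_def)
  also have "\<dots> = 1 / \<rho>"
    using \<rho>_pos by (simp add: power2_eq_square)
  finally have bound: "eff_conductance E a b \<le> ennreal (1 / (2 * \<rho>))"
    by (simp add: mult.commute)
  show ?thesis
    using eff_resistance_ge[OF assms(1) _ bound] \<rho>_pos by (simp add: \<rho>_def)
qed

lemma eff_resistance_le_proj_diag:
  assumes "E a b" "finite P" "P \<subseteq> {(u,w). E u w}" "(a,b) \<in> P" "orthonormal_on P fs r"
    and span: "\<And>f. in_grad_span P fs r f"
  shows "eff_resistance E a b \<le> 2 * proj_diag fs r (a,b)"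
proof -
  define \<rho> where "\<rho> = proj_diag fs r (a,b)"
  have unit_grad: "1 \<le> grad_inner P f f * \<rho>" if "f a = 1" "f b = 0" for f
    using grad_sq_le_proj_diag[OF assms(5) span assms(4), of f] that by (simp add: grad_def \<rho>_def)
  have "1 \<le> grad_inner P (indicator {a}) (indicator {a}) * \<rho>"
    by (rule unit_grad) (use edge_neq[OF assms(1)] in auto)
  then have "\<rho> \<noteq> 0"
    by auto
  then have \<rho>_pos: "0 < \<rho>"
    using proj_diag_nonneg[of fs r "(a,b)"] by (simp add: \<rho>_def)
  have bound: "ennreal (1 / (2 * \<rho>)) \<le> eff_conductance E a b"
  proof (rule eff_conductance_greatest)
    fix f :: "'a \<Rightarrow> real"
    assume "f a = 1" "f b = 0"
    then have "1 \<le> grad_inner P f f * \<rho>"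
      by (rule unit_grad)
    then have "1 / (2 * \<rho>) \<le> grad_inner P f f / 2"
      using \<rho>_pos by (simp add: field_simps)
    then have "ennreal (1 / (2 * \<rho>)) \<le> ennreal (grad_inner P f f / 2)"
      by (rule ennreal_leI)
    also have "\<dots> \<le> dirichlet_energy E f"
      by (rule dirichlet_energy_ge_grad_inner[OF assms(2,3)])
    finally show "ennreal (1 / (2 * \<rho>)) \<le> dirichlet_energy E f" .
  qed
  show ?thesis
    using eff_resistance_le[OF assms(1) _ bound] \<rho>_pos by (simp add: \<rho>_def)
qed

end

section \<open>Invariance under automorphisms\<close>

lemma graph_automorphism_edges:
  assumes "graph_automorphism E \<sigma>"
  shows "bij_betw (map_prod \<sigma> \<sigma>) {(u,w). E u w} {(u,w). E u w}"
proof -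
  have bij: "bij (map_prod \<sigma> \<sigma>)"
    using assms bij_betw_map_prod[of \<sigma> UNIV UNIV \<sigma> UNIV UNIV] by (simp add: graph_automorphism_def)
  have "{(u,w). E u w} = map_prod \<sigma> \<sigma> -` {(u,w). E u w}"
    using assms by (auto simp: graph_automorphism_def)
  then show ?thesis
    using bij bij_betw_subset[of _ UNIV UNIV] by (metis bij_is_surj subset_UNIV surj_image_vimage_eq)
qed

lemma graph_automorphism_neighbours:
  assumes "graph_automorphism E \<sigma>"
  shows "bij_betw \<sigma> (neighbours E u) (neighbours E (\<sigma> u))"
proof -
  have bij: "bij \<sigma>"
    using assms by (simp add: graph_automorphism_def)
  have "neighbours E u = \<sigma> -` neighbours E (\<sigma> u)"
    using assms by (auto simp: graph_automorphism_def neighbours_def)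
  then show ?thesis
    using bij bij_betw_subset[of _ UNIV UNIV] by (metis bij_is_surj subset_UNIV surj_image_vimage_eq)
qed

lemma dirichlet_energy_comp_automorphism:
  assumes "graph_automorphism E \<sigma>"
  shows "dirichlet_energy E (f \<circ> \<sigma>) = dirichlet_energy E f"
proof -
  have "(\<lambda>(u,w). ennreal (((f \<circ> \<sigma>) u - (f \<circ> \<sigma>) w)\<^sup>2))
      = (\<lambda>x. (\<lambda>(u,w). ennreal ((f u - f w)\<^sup>2)) (map_prod \<sigma> \<sigma> x))"
    by auto
  then show ?thesis
    unfolding dirichlet_energy_def
    by (simp only: infsum_reindex_bij_betw[OF graph_automorphism_edges[OF assms]])
qed

lemma eff_conductance_automorphism:
  assumes "graph_automorphism E \<sigma>"
  shows "eff_conductance E (\<sigma> a) (\<sigma> b) = eff_conductance E a b"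
proof (rule antisym)
  have inv: "inv \<sigma> (\<sigma> x) = x" for x
    using assms by (simp add: graph_automorphism_def bij_is_inj)
  show "eff_conductance E (\<sigma> a) (\<sigma> b) \<le> eff_conductance E a b"
  proof (rule eff_conductance_greatest)
    fix f :: "'a \<Rightarrow> real"
    assume "f a = 1" "f b = 0"
    then have "eff_conductance E (\<sigma> a) (\<sigma> b) \<le> dirichlet_energy E (f \<circ> inv \<sigma>)"
      by (intro eff_conductance_le_dirichlet_energy) (simp_all add: inv)
    also have "\<dots> = dirichlet_energy E (f \<circ> inv \<sigma> \<circ> \<sigma>)"
      by (rule dirichlet_energy_comp_automorphism[OF assms, symmetric])
    also have "f \<circ> inv \<sigma> \<circ> \<sigma> = f"
      by (auto simp: inv)
    finally show "eff_conductance E (\<sigma> a) (\<sigma> b) \<le> dirichlet_energy E f" .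
  qed
  show "eff_conductance E a b \<le> eff_conductance E (\<sigma> a) (\<sigma> b)"
  proof (rule eff_conductance_greatest)
    fix f :: "'a \<Rightarrow> real"
    assume "f (\<sigma> a) = 1" "f (\<sigma> b) = 0"
    then have "eff_conductance E a b \<le> dirichlet_energy E (f \<circ> \<sigma>)"
      by (intro eff_conductance_le_dirichlet_energy) simp_all
    then show "eff_conductance E a b \<le> dirichlet_energy E f"
      by (simp add: dirichlet_energy_comp_automorphism[OF assms])
  qed
qed

definition resistance_sum :: "('a \<Rightarrow> 'a \<Rightarrow> bool) \<Rightarrow> 'a \<Rightarrow> real" where
  "resistance_sum E u = (\<Sum>x\<in>neighbours E u. eff_resistance E u x)"

lemma resistance_sum_automorphism:
  assumes "graph_automorphism E \<sigma>"
  shows "resistance_sum E (\<sigma> u) = resistance_sum E u"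
proof -
  have "resistance_sum E (\<sigma> u) = (\<Sum>x\<in>neighbours E u. eff_resistance E (\<sigma> u) (\<sigma> x))"
    unfolding resistance_sum_def
    by (rule sum.reindex_bij_betw[OF graph_automorphism_neighbours[OF assms], symmetric])
  also have "\<dots> = resistance_sum E u"
    by (simp add: resistance_sum_def eff_resistance_def eff_conductance_automorphism[OF assms])
  finally show ?thesis .
qed

lemma resistance_sum_vertex_transitive:
  assumes "vertex_transitive E"
  shows "resistance_sum E u = resistance_sum E v"
  using assms resistance_sum_automorphism unfolding vertex_transitive_def by metis

section \<open>Resistance sums over finite vertex sets\<close>

context locally_finite_graph
begin

lemma sum_resistance_sum:
  "finite S \<Longrightarrow> (\<Sum>u\<in>S. resistance_sum E u) = (\<Sum>(u,w)\<in>Sigma S (neighbours E). eff_resistance E u w)"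
  by (simp add: resistance_sum_def sum.Sigma finite_neighbours)

lemma card_le_degree_boundary:
  assumes "finite S" "\<And>v. card (neighbours E v) \<le> k" "Q \<subseteq> Sigma (boundary E S) (neighbours E)"
  shows "card Q \<le> k * card (boundary E S)"
proof -
  have fin: "finite (boundary E S)"
    using assms(1) by (simp add: boundary_def)
  have "card Q \<le> card (Sigma (boundary E S) (neighbours E))"
    by (rule card_mono) (use fin finite_neighbours assms(3) in auto)
  also have "\<dots> = (\<Sum>u\<in>boundary E S. card (neighbours E u))"
    using fin finite_neighbours by (simp add: card_SigmaI)
  also have "\<dots> \<le> k * card (boundary E S)"
    using sum_bounded_above[of "boundary E S" "\<lambda>u. card (neighbours E u)" k] assms(2) by (simp add: mult.commute)
  finally show ?thesis .
qed

lemma resistance_sum_upper: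
  assumes "finite S" "\<And>v. card (neighbours E v) \<le> k"
  shows "(\<Sum>u\<in>S. resistance_sum E u) \<le> 2 * real (card S) + real k * real (card (boundary E S))"
proof -
  define P where "P = {(u,w). E u w \<and> u \<in> S \<and> w \<in> S}"
  define Q where "Q = {(u,w). E u w \<and> u \<in> S \<and> w \<notin> S}"
  have split: "Sigma S (neighbours E) = P \<union> Q" "P \<inter> Q = {}"
    by (auto simp: P_def Q_def neighbours_def)
  have "finite (Sigma S (neighbours E))"
    using assms(1) finite_neighbours by simp
  then have fin: "finite P" "finite Q"
    using split(1) by auto
  obtain fs r where "r \<le> card S" and on: "orthonormal_on P fs r"
    and span_ind: "\<forall>x\<in>S. in_grad_span P fs r (indicator {x})"
    using gram_schmidt_gradients[OF fin(1) assms(1)] by blast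
  have span: "in_grad_span P fs r g" for g
    by (rule in_grad_span_of_indicators[OF assms(1) _ span_ind]) (auto simp: P_def)
  have "(\<Sum>(u,w)\<in>P. eff_resistance E u w) \<le> (\<Sum>p\<in>P. 2 * proj_diag fs r p)"
    by (rule sum_mono) (auto simp: P_def intro: eff_resistance_le_proj_diag[OF _ fin(1) _ _ on span])
  also have "\<dots> = 2 * r"
    by (simp add: orthonormal_on_trace[OF on] flip: sum_distrib_left)
  also have "\<dots> \<le> 2 * card S"
    using \<open>r \<le> card S\<close> by simp
  finally have inner: "(\<Sum>(u,w)\<in>P. eff_resistance E u w) \<le> 2 * card S" .
  have "(\<Sum>(u,w)\<in>Q. eff_resistance E u w) \<le> (\<Sum>p\<in>Q. 1)"
    by (rule sum_mono) (auto simp: Q_def intro: eff_resistance_edge_bounds(2))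
  also have "\<dots> = card Q"
    by simp
  also have "card Q \<le> k * card (boundary E S)"
    by (rule card_le_degree_boundary[OF assms]) (auto simp: Q_def boundary_def neighbours_def)
  finally have outer: "(\<Sum>(u,w)\<in>Q. eff_resistance E u w) \<le> k * card (boundary E S)"
    by (simp flip: of_nat_mult)
  show ?thesis
    using sum.union_disjoint[OF fin split(2), of "\<lambda>(u,w). eff_resistance E u w"] inner outer
    by (simp add: sum_resistance_sum[OF assms(1)] split(1))
qed

lemma resistance_sum_lower:
  assumes "connected_graph E" "infinite (UNIV :: 'a set)" "finite S" "\<And>v. card (neighbours E v) \<le> k"
  shows "2 * real (card S) - real k * real (card (boundary E S)) \<le> (\<Sum>u\<in>S. resistance_sum E u)"
proof -
  define P where "P = {(u,w). E u w \<and> (u \<in> S \<or> w \<in> S)}"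
  define Q where "Q = {(u,w). E u w \<and> u \<notin> S \<and> w \<in> S}"
  have split: "P = Sigma S (neighbours E) \<union> Q" "Sigma S (neighbours E) \<inter> Q = {}"
    by (auto simp: P_def Q_def neighbours_def)
  have swap_Q: "prod.swap ` Q \<subseteq> Sigma (boundary E S) (neighbours E)"
    unfolding Q_def boundary_def neighbours_def using edge_sym by fastforce
  have "finite (Sigma (boundary E S) (neighbours E))"
    using assms(3) finite_neighbours by (simp add: boundary_def)
  then have fin_Q: "finite Q"
    using swap_Q finite_subset finite_imageD by (metis inj_on_def swap_swap)
  have "card Q \<le> k * card (boundary E S)"
    using card_le_degree_boundary[OF assms(3,4) swap_Q] by (simp add: card_image)
  then have card_Q: "real (card Q) \<le> real k * real (card (boundary E S))"
    by (simp flip: of_nat_mult)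
  have fin_Sigma: "finite (Sigma S (neighbours E))"
    using assms(3) finite_neighbours by simp
  then have fin_P: "finite P"
    using fin_Q split(1) by simp
  obtain fs r where on: "orthonormal_on P fs r" and supp: "\<forall>i<r. \<forall>y. y \<notin> S \<longrightarrow> fs i y = 0"
    and inj: "grad_injective_on P S \<longrightarrow> r = card S"
    using gram_schmidt_gradients[OF fin_P assms(3)] by blast
  have "grad_injective_on P S"
    by (rule grad_injective_on_connected[OF assms(1-3)]) (auto simp: P_def)
  then have trace: "(\<Sum>p\<in>P. proj_diag fs r p) = card S"
    using inj orthonormal_on_trace[OF on] by simp
  have vanish: "grad p (fs i) = 0" if "p \<in> {(u,w). E u w} - P" "i < r" for p i
    using that supp by (cases p) (simp add: P_def grad_def)
  have lower: "2 * proj_diag fs r (u,w) \<le> eff_resistance E u w" if "E u w" for u w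
    by (rule eff_resistance_ge_proj_diag[OF that fin_P _ on vanish]) (auto simp: P_def)
  have "(\<Sum>p\<in>Q. proj_diag fs r p) \<le> (\<Sum>p\<in>Q. 1 / 2)"
    using lower eff_resistance_edge_bounds(2) by (intro sum_mono) (fastforce simp: Q_def)
  then have "2 * real (card S) - card Q \<le> 2 * (\<Sum>p\<in>Sigma S (neighbours E). proj_diag fs r p)"
    using trace sum.union_disjoint[OF fin_Sigma fin_Q split(2), of "proj_diag fs r"] split(1) by simp
  also have "\<dots> \<le> (\<Sum>(u,w)\<in>Sigma S (neighbours E). eff_resistance E u w)"
    by (auto simp: sum_distrib_left neighbours_def intro!: sum_mono lower)
  finally show ?thesis
    using card_Q sum_resistance_sum[OF assms(3)] by simp
qed

lemma resistance_sum_near_2: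
  assumes "vertex_transitive E" "connected_graph E" "infinite (UNIV :: 'a set)"
    and "\<And>v. card (neighbours E v) \<le> k" "finite S" "S \<noteq> {}"
  shows "\<bar>resistance_sum E v - 2\<bar> \<le> real k * (real (card (boundary E S)) / real (card S))"
proof -
  have "(\<Sum>u\<in>S. resistance_sum E u) = (\<Sum>u\<in>S. resistance_sum E v)"
    using resistance_sum_vertex_transitive[OF assms(1)] by (rule sum.cong[OF refl])
  then have "\<bar>real (card S) * resistance_sum E v - 2 * real (card S)\<bar> \<le> real k * real (card (boundary E S))"
    using resistance_sum_upper[OF assms(5,4)] resistance_sum_lower[OF assms(2,3,5,4)] by simp
  moreover have "real (card S) * \<bar>resistance_sum E v - 2\<bar> = \<bar>real (card S) * resistance_sum E v - 2 * real (card S)\<bar>"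
    by (metis abs_mult abs_of_nat right_diff_distrib mult.commute)
  ultimately have "real (card S) * \<bar>resistance_sum E v - 2\<bar> \<le> real k * real (card (boundary E S))"
    by simp
  moreover have "0 < real (card S)"
    using assms(5,6) by (simp add: card_gt_0_iff)
  ultimately show ?thesis
    by (simp add: field_simps)
qed

end

theorem corollary1:
  fixes E :: "'a \<Rightarrow> 'a \<Rightarrow> bool" and k :: nat and v :: 'a
  assumes "simple_graph E"
    and "infinite (UNIV :: 'a set)"
    and "connected_graph E"
    and "vertex_transitive E"
    and "smallish E"
    and "regular_graph E k"
  shows "(\<Sum>x \<in> neighbours E v. eff_resistance E v x) = 2"
proof -
  interpret locally_finite_graph E
    using assms(1,6) by unfold_locales (simp_all add: regular_graph_def)
  have degree: "card (neighbours E u) \<le> k" for u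
    using assms(6) by (simp add: regular_graph_def)
  obtain G :: "nat \<Rightarrow> 'a set" where G: "\<And>m. finite (G m)" "incseq G" "(\<Union>m. G m) = UNIV"
    and amenable: "(\<lambda>m. real (card (boundary E (G m))) / real (card (G m))) \<longlonglongrightarrow> 0"
    using assms(5) unfolding smallish_def by (metis incseq_SucI)
  obtain m0 where "v \<in> G m0"
    using G(3) by blast
  then have "G m \<noteq> {}" if "m0 \<le> m" for m
    using G(2) that by (auto simp: incseq_def)
  then have "\<forall>m\<ge>m0. \<bar>resistance_sum E v - 2\<bar> \<le> real k * (real (card (boundary E (G m))) / real (card (G m)))"
    using resistance_sum_near_2[OF assms(4,3,2) degree G(1)] by blast
  moreover have "(\<lambda>m. real k * (real (card (boundary E (G m))) / real (card (G m)))) \<longlonglongrightarrow> 0"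
    using tendsto_mult_right_zero[OF amenable] by simp
  ultimately have "\<bar>resistance_sum E v - 2\<bar> \<le> 0"
    by (intro LIMSEQ_le_const) auto
  then show ?thesis
    by (simp add: resistance_sum_def)
qed

end
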